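(* Let $\mathcal{D}=\{(\mathbf{x}_i,y_i)\}_{i=1}^n$ be a training set, $f(\mathbf{x};\mathbf{w})$ a model, $\ell$ a loss, and $\mathcal{L}(\mathcal{D};\mathbf{w})=\frac{1}{n}\sum_{i=1}^n\ell(f(\mathbf{x}_i;\mathbf{w}),y_i)$. Assume $\mathcal{L}(\mathcal{D};\cdot)$ is $\beta$-smooth, i.e. $\|\nabla\mathcal{L}(\mathcal{D};\mathbf{w})-\nabla\mathcal{L}(\mathcal{D};\mathbf{v})\|\le\beta\|\mathbf{w}-\mathbf{v}\|$. Consider an algorithm $\mathcal{A}$ with full-batch gradients: for $t=0,\dots,T-1$, with $\xi_t\in\{0,1\}$ indicating whether iteration $t$ uses a SAM update, $$\mathbf{w}_{t+1}=\mathbf{w}_t-\eta\Big((1-\xi_t)\nabla\mathcal{L}(\mathcal{D};\mathbf{w}_t)+\xi_t\nabla\mathcal{L}\big(\mathcal{D};\mathbf{w}_t+\rho\nabla\mathcal{L}(\mathcal{D};\mathbf{w}_t)\big)\Big).$$ If $\rho<\frac{1}{2\beta}$ and $\eta<\frac{1}{\beta}$, then $$\min_{0\le t\le T-1}\|\nabla\mathcal{L}(\mathcal{D};\mathbf{w}_t)\|^2\le\frac{\mathcal{L}(\mathcal{D};\mathbf{w}_0)-\mathcal{L}(\mathcal{D};\mathbf{w}_T)}{T\eta\left(1-\frac{\beta\eta}{2}-\beta\rho\zeta\right)},$$ where $\zeta=\frac{1}{T}\sum_{t=0}^{T-1}\xi_t\in[0,1]$.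
   Context: $\eta>0$ is the stepsize and $\rho>0$ the SAM perturbation radius; the rule choosing $\xi_t$ is arbitrary. *)

theory Defs
  imports "HOL-Analysis.Analysis"
begin

definition emp_loss ::
  "('p \<Rightarrow> 'y \<Rightarrow> real) \<Rightarrow> ('x \<Rightarrow> 'w \<Rightarrow> 'p) \<Rightarrow> nat \<Rightarrow> (nat \<Rightarrow> 'x \<times> 'y) \<Rightarrow> 'w \<Rightarrow> real"
  where "emp_loss loss f n D w = (1 / real n) * (\<Sum>i<n. loss (f (fst (D i)) w) (snd (D i)))"

end

theory Submission
  imports Defs
begin

text \<open>A SAM step differs from a gradient step by the perturbation
  \<open>e = G (w + \<rho> G w) - G w\<close>, and \<open>\<beta>\<close>-smoothness bounds \<open>norm e \<le> \<beta> \<rho> norm (G w)\<close>.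
  Feeding this into the quadratic upper bound for functions with \<open>\<beta>\<close>-Lipschitz
  gradient shows that every step, plain or SAM, decreases the loss by at least
  \<open>\<eta> (1 - \<beta> \<eta> / 2 - \<beta> \<rho> \<xi>\<^sub>t) norm (G w\<^sub>t)\<^sup>2\<close>. Summing these decreases telescopes,
  and bounding each squared gradient norm from below by their minimum gives the rate.\<close>

lemma lipschitz_gradient_quadratic_upper_bound:
  fixes L :: "'w::real_inner \<Rightarrow> real" and G :: "'w \<Rightarrow> 'w"
  assumes grad: "\<And>v. GDERIV L v :> G v"
    and smooth: "\<And>u v. norm (G u - G v) \<le> \<beta> * norm (u - v)"
  shows "L y \<le> L x + G x \<bullet> (y - x) + \<beta> / 2 * (norm (y - x))\<^sup>2"
proof -
  define d where "d = y - x"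
  define \<phi> where "\<phi> s = L (x + s *\<^sub>R d) - s * (G x \<bullet> d) - \<beta> / 2 * s\<^sup>2 * (norm d)\<^sup>2" for s
  have L_along_line: "((\<lambda>s. L (x + s *\<^sub>R d)) has_real_derivative (G (x + s *\<^sub>R d) \<bullet> d)) (at s)"
    for s
  proof -
    have "(L has_derivative (\<lambda>h. h \<bullet> G (x + s *\<^sub>R d))) (at (x + s *\<^sub>R d))"
      using grad by (simp add: gderiv_def)
    moreover have "((\<lambda>s. x + s *\<^sub>R d) has_derivative (\<lambda>h. h *\<^sub>R d)) (at s)"
      by (auto intro!: derivative_eq_intros)
    ultimately have "((\<lambda>s. L (x + s *\<^sub>R d)) has_derivative (\<lambda>h. (h *\<^sub>R d) \<bullet> G (x + s *\<^sub>R d))) (at s)"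
      using diff_chain_at by (fastforce simp: o_def)
    moreover have "(\<lambda>h. (h *\<^sub>R d) \<bullet> G (x + s *\<^sub>R d)) = (*) (G (x + s *\<^sub>R d) \<bullet> d)"
      by (auto simp: inner_commute)
    ultimately show ?thesis
      by (simp add: has_field_derivative_def)
  qed
  have \<phi>_deriv: "(\<phi> has_real_derivative (G (x + s *\<^sub>R d) - G x) \<bullet> d - \<beta> * s * (norm d)\<^sup>2) (at s)"
    for s
    unfolding \<phi>_def
    by (rule derivative_eq_intros L_along_line refl)+
      (auto simp: power2_eq_square inner_diff_left)
  have "\<phi> 1 \<le> \<phi> 0"
  proof (rule DERIV_nonpos_imp_nonincreasing[of 0 1 \<phi>])
    fix s :: real
    assume s: "0 \<le> s" "s \<le> 1"
    have "(G (x + s *\<^sub>R d) - G x) \<bullet> d \<le> norm (G (x + s *\<^sub>R d) - G x) * norm d"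
      by (rule norm_cauchy_schwarz)
    also have "\<dots> \<le> \<beta> * s * (norm d)\<^sup>2"
      using mult_right_mono[OF smooth[of "x + s *\<^sub>R d" x] norm_ge_zero[of d]] s
      by (simp add: power2_eq_square mult_ac)
    finally show "\<exists>y. (\<phi> has_real_derivative y) (at s) \<and> y \<le> 0"
      using \<phi>_deriv[of s] by (meson diff_le_0_iff_le)
  qed simp
  then show ?thesis
    by (simp add: \<phi>_def d_def inner_commute)
qed

lemma perturbed_gradient_step_decrease:
  fixes L :: "'w::real_inner \<Rightarrow> real" and G :: "'w \<Rightarrow> 'w"
  assumes grad: "\<And>v. GDERIV L v :> G v"
    and smooth: "\<And>u v. norm (G u - G v) \<le> \<beta> * norm (u - v)"
    and "0 \<le> \<beta>" "0 \<le> \<eta>" "\<beta> * \<eta> \<le> 1" "0 \<le> \<delta>" "\<delta> \<le> 2"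
    and perturbation: "norm e \<le> \<delta> * norm (G x)"
  shows "L (x - \<eta> *\<^sub>R (G x + e)) \<le> L x - \<eta> * (1 - \<beta> * \<eta> / 2 - \<delta>) * (norm (G x))\<^sup>2"
proof -
  define g where "g = G x"
  have "L (x - \<eta> *\<^sub>R (g + e)) \<le> L x - \<eta> * (g \<bullet> (g + e)) + \<beta> / 2 * \<eta>\<^sup>2 * (norm (g + e))\<^sup>2"
    using lipschitz_gradient_quadratic_upper_bound[OF grad smooth, of "x - \<eta> *\<^sub>R (g + e)" x]
    by (simp add: g_def power_mult_distrib)
  also have "\<dots> = L x - \<eta> * (1 - \<beta> * \<eta> / 2) * (norm g)\<^sup>2
      + (\<eta> * (1 - \<beta> * \<eta>) * (- (g \<bullet> e)) + \<beta> * \<eta>\<^sup>2 / 2 * (norm e)\<^sup>2)"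
  proof -
    have "(norm (g + e))\<^sup>2 = (norm g)\<^sup>2 + 2 * (g \<bullet> e) + (norm e)\<^sup>2"
      by (simp add: power2_norm_eq_inner inner_add_left inner_add_right inner_commute)
    moreover have "g \<bullet> (g + e) = (norm g)\<^sup>2 + g \<bullet> e"
      by (simp add: power2_norm_eq_inner inner_add_right)
    ultimately show ?thesis
      by (simp add: algebra_simps power2_eq_square)
  qed
  also have "\<dots> \<le> L x - \<eta> * (1 - \<beta> * \<eta> / 2) * (norm g)\<^sup>2 + \<eta> * \<delta> * (norm g)\<^sup>2"
  proof -
    have "- (g \<bullet> e) \<le> norm g * norm e"
      using norm_cauchy_schwarz[of "- g" e] by simp
    also have "\<dots> \<le> \<delta> * (norm g)\<^sup>2"
      using mult_left_mono[OF perturbation norm_ge_zero[of g]]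
      by (simp add: g_def power2_eq_square mult_ac)
    finally have first: "\<eta> * (1 - \<beta> * \<eta>) * (- (g \<bullet> e)) \<le> \<eta> * (1 - \<beta> * \<eta>) * (\<delta> * (norm g)\<^sup>2)"
      using assms by (intro mult_left_mono) auto
    have "(norm e)\<^sup>2 \<le> (\<delta> * norm g)\<^sup>2"
      using perturbation by (intro power_mono) (auto simp: g_def)
    then have "\<beta> * \<eta>\<^sup>2 / 2 * (norm e)\<^sup>2 \<le> \<beta> * \<eta>\<^sup>2 / 2 * (\<delta> * norm g)\<^sup>2"
      using assms by (intro mult_left_mono) auto
    also have "\<dots> = \<eta> * (\<beta> * \<eta>) * (\<delta> / 2) * (\<delta> * (norm g)\<^sup>2)"
      by (simp add: power2_eq_square)
    also have "\<dots> \<le> \<eta> * (\<beta> * \<eta>) * (\<delta> * (norm g)\<^sup>2)"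
      using assms by (intro mult_right_mono mult_left_le) auto
    finally show ?thesis
      using first by (simp add: algebra_simps)
  qed
  finally show ?thesis
    by (simp add: g_def algebra_simps)
qed

lemma Min_le_decrease_over_weights:
  fixes a c V :: "nat \<Rightarrow> real"
  assumes "T \<ge> 1"
    and pos: "\<And>t. t < T \<Longrightarrow> 0 < c t"
    and decrease: "\<And>t. t < T \<Longrightarrow> c t * a t \<le> V t - V (Suc t)"
  shows "Min {a t | t. t < T} \<le> (V 0 - V T) / (\<Sum>t<T. c t)"
proof -
  define m where "m = Min {a t | t. t < T}"
  have "m * (\<Sum>t<T. c t) = (\<Sum>t<T. c t * m)"
    by (simp add: sum_distrib_left mult.commute)
  also have "\<dots> \<le> (\<Sum>t<T. c t * a t)"
    using pos by (intro sum_mono mult_left_mono) (auto simp: m_def less_imp_le intro!: Min_le)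
  also have "\<dots> \<le> (\<Sum>t<T. V t - V (Suc t))"
    using decrease by (rule sum_mono) simp
  also have "\<dots> = V 0 - V T"
    by (rule sum_lessThan_telescope')
  moreover have "0 < (\<Sum>t<T. c t)"
    using assms by (intro sum_pos) (auto simp: lessThan_empty_iff)
  ultimately show ?thesis
    by (simp add: m_def pos_le_divide_eq)
qed

theorem theorem2:
  fixes loss :: "'p \<Rightarrow> 'y \<Rightarrow> real"
    and f :: "'x \<Rightarrow> 'w::euclidean_space \<Rightarrow> 'p"
    and n :: nat and D :: "nat \<Rightarrow> 'x \<times> 'y"
    and G :: "'w \<Rightarrow> 'w"
    and \<beta> \<eta> \<rho> :: real and T :: nat
    and w :: "nat \<Rightarrow> 'w" and \<xi> :: "nat \<Rightarrow> real"
  assumes grad: "\<And>v. GDERIV (emp_loss loss f n D) v :> G v"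
    and smooth: "\<And>u v. norm (G u - G v) \<le> \<beta> * norm (u - v)"
    and beta_pos: "\<beta> > 0"
    and eta_pos: "\<eta> > 0" and rho_pos: "\<rho> > 0"
    and rho_lt: "\<rho> < 1 / (2 * \<beta>)" and eta_lt: "\<eta> < 1 / \<beta>"
    and T_pos: "T \<ge> 1"
    and xi01: "\<And>t. t < T \<Longrightarrow> \<xi> t \<in> {0, 1}"
    and update: "\<And>t. t < T \<Longrightarrow>
       w (Suc t) = w t - \<eta> *\<^sub>R ((1 - \<xi> t) *\<^sub>R G (w t) + \<xi> t *\<^sub>R G (w t + \<rho> *\<^sub>R G (w t)))"
  shows "Min {(norm (G (w t)))\<^sup>2 | t. t < T}
    \<le> (emp_loss loss f n D (w 0) - emp_loss loss f n D (w T)) /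
       (real T * \<eta> * (1 - \<beta> * \<eta> / 2 - \<beta> * \<rho> * ((1 / real T) * (\<Sum>t<T. \<xi> t))))"
proof -
  define L where "L = emp_loss loss f n D"
  define c where "c t = \<eta> * (1 - \<beta> * \<eta> / 2 - \<beta> * \<rho> * \<xi> t)" for t
  have \<beta>\<eta>: "\<beta> * \<eta> < 1" and \<beta>\<rho>: "\<beta> * \<rho> < 1 / 2"
    using rho_lt eta_lt beta_pos by (auto simp: field_simps)
  have step: "c t * (norm (G (w t)))\<^sup>2 \<le> L (w t) - L (w (Suc t))" if t: "t < T" for t
  proof -
    define e where "e = \<xi> t *\<^sub>R (G (w t + \<rho> *\<^sub>R G (w t)) - G (w t))"
    have "w (Suc t) = w t - \<eta> *\<^sub>R (G (w t) + e)"
      using update[OF t] by (simp add: e_def algebra_simps)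
    moreover have "norm e \<le> \<beta> * \<rho> * \<xi> t * norm (G (w t))"
      using smooth[of "w t + \<rho> *\<^sub>R G (w t)" "w t"] xi01[OF t] rho_pos by (auto simp: e_def)
    moreover have "0 \<le> \<beta> * \<rho> * \<xi> t" "\<beta> * \<rho> * \<xi> t \<le> 2"
      using xi01[OF t] \<beta>\<rho> beta_pos rho_pos by auto
    ultimately show ?thesis
      using perturbed_gradient_step_decrease[OF grad smooth, of \<eta> "\<beta> * \<rho> * \<xi> t" e "w t"]
        beta_pos eta_pos \<beta>\<eta>
      by (simp add: L_def c_def mult_ac)
  qed
  have "c t > 0" if "t < T" for t
    using xi01[OF that] \<beta>\<eta> \<beta>\<rho> eta_pos by (auto simp: c_def)
  from Min_le_decrease_over_weights[where V = "\<lambda>t. L (w t)", OF T_pos this step]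
  have "Min {(norm (G (w t)))\<^sup>2 | t. t < T} \<le> (L (w 0) - L (w T)) / (\<Sum>t<T. c t)" .
  also have "(\<Sum>t<T. c t) = \<eta> * (real T * (1 - \<beta> * \<eta> / 2) - \<beta> * \<rho> * (\<Sum>t<T. \<xi> t))"
    by (simp add: c_def sum_subtractf sum_distrib_left[symmetric])
  also have "\<dots> = real T * \<eta> * (1 - \<beta> * \<eta> / 2 - \<beta> * \<rho> * ((1 / real T) * (\<Sum>t<T. \<xi> t)))"
    using T_pos by (simp add: field_simps)
  finally show ?thesis
    by (simp add: L_def)
qed

end
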